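(* Let $A$ be a finite abelian group of even order and let $T$ be a square-free subset of $A$ with $|T|=|A|/2-1$. If $|T-T^0|<|A|$, where $T^0=T\cup\{0\}$, then $\mathrm{CayS}(A,T)$ admits a perfect code.
   Context: $A$ is written additively with identity $0$. An element $x$ of $A$ is a square if $x=2y$ for some $y\in A$; a subset is square-free if it contains no squares. For a square-free $T\subseteq A$, the Cayley sum graph $\mathrm{CayS}(A,T)$ is the simple graph with vertex set $A$ in which distinct $x,y$ are adjacent iff $x+y\in T$. A subset $C$ of the vertex set of a graph is a perfect code if every vertex is at distance at most one from exactly one vertex of $C$. For $B,C\subseteq A$, $B-C=\{b-c:b\in B,c\in C\}$. *)

theory Defs
  imports Main
begin

(* The finite abelian group A is the universe of a type 'a :: {ab_group_add, finite}. *)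

definition is_square :: "'a::ab_group_add \<Rightarrow> bool" where
  "is_square x \<longleftrightarrow> (\<exists>y. x = y + y)"

definition square_free :: "'a::ab_group_add set \<Rightarrow> bool" where
  "square_free T \<longleftrightarrow> (\<forall>x\<in>T. \<not> is_square x)"

definition cays_adj :: "'a::ab_group_add set \<Rightarrow> 'a \<Rightarrow> 'a \<Rightarrow> bool" where
  "cays_adj T x y \<longleftrightarrow> x \<noteq> y \<and> x + y \<in> T"

definition cays_perfect_code :: "'a::ab_group_add set \<Rightarrow> 'a set \<Rightarrow> bool" where
  "cays_perfect_code T C \<longleftrightarrow>
     (\<forall>v. \<exists>!c. c \<in> C \<and> (c = v \<or> cays_adj T v c))"

definition set_diff_group :: "'a::ab_group_add set \<Rightarrow> 'a set \<Rightarrow> 'a set" where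
  "set_diff_group B C = {b - c | b c. b \<in> B \<and> c \<in> C}"

end

theory Submission
  imports Defs
begin

text \<open>The closed neighbourhood of c in CayS(A,T) is {c} \<union> (T - c), and square-freeness
  keeps c out of T - c, so every closed neighbourhood has |T| + 1 = |A|/2 elements.
  A nonzero d outside T - (T \<union> {0}) makes the neighbourhoods of 0 and d disjoint; being
  two halves of A they then partition it, so {0, d} is a perfect code.\<close>

definition cays_closed_nbhd :: "'a::ab_group_add set \<Rightarrow> 'a \<Rightarrow> 'a set" where
  "cays_closed_nbhd T c = insert c ((\<lambda>t. t - c) ` T)"

lemma mem_cays_closed_nbhd_iff:
  "v \<in> cays_closed_nbhd T c \<longleftrightarrow> v = c \<or> cays_adj T v c"
  unfolding cays_closed_nbhd_def cays_adj_def
  by (auto simp: image_iff algebra_simps intro: bexI[of _ "v + c"])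

lemma cays_perfect_code_iff_closed_nbhd:
  "cays_perfect_code T C \<longleftrightarrow> (\<forall>v. \<exists>!c. c \<in> C \<and> v \<in> cays_closed_nbhd T c)"
  unfolding cays_perfect_code_def mem_cays_closed_nbhd_iff by (simp add: eq_commute)

lemma card_cays_closed_nbhd:
  assumes "finite T" and "square_free T"
  shows "card (cays_closed_nbhd T c) = card T + 1"
proof -
  have "c \<notin> (\<lambda>t. t - c) ` T"
  proof
    assume "c \<in> (\<lambda>t. t - c) ` T"
    then obtain t where "t \<in> T" and "t = c + c"
      by (auto simp: algebra_simps)
    with assms(2) show False
      unfolding square_free_def is_square_def by blast
  qed
  moreover have "card ((\<lambda>t. t - c) ` T) = card T"
    by (rule card_image) (simp add: inj_on_def)
  ultimately show ?thesis
    using assms(1) by (simp add: cays_closed_nbhd_def)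
qed

lemma disjoint_cays_closed_nbhd_zero:
  assumes "d \<notin> set_diff_group T (insert 0 T)" and "d \<noteq> 0"
  shows "cays_closed_nbhd T 0 \<inter> cays_closed_nbhd T d = {}"
proof (rule ccontr)
  assume "cays_closed_nbhd T 0 \<inter> cays_closed_nbhd T d \<noteq> {}"
  then obtain v where v0: "v \<in> insert 0 T" and vd: "v = d \<or> (\<exists>t\<in>T. v = t - d)"
    unfolding cays_closed_nbhd_def by auto
  have "d \<in> set_diff_group T (insert 0 T)"
  proof (cases "v = d")
    case True
    with v0 assms(2) have "d \<in> T" by auto
    then show ?thesis
      unfolding set_diff_group_def by force
  next
    case False
    with vd obtain t where "t \<in> T" and "d = t - v"
      by (auto simp: algebra_simps)
    with v0 show ?thesis
      unfolding set_diff_group_def by blast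
  qed
  with assms(1) show False ..
qed

lemma disjoint_Un_eq_UNIV_if_card_sum:
  fixes A B :: "'a::finite set"
  assumes "A \<inter> B = {}" and "card A + card B = card (UNIV :: 'a set)"
  shows "A \<union> B = UNIV"
  using assms by (simp add: card_Un_disjoint card_subset_eq)

lemma set_diff_group_empty [simp]: "set_diff_group {} C = {}"
  by (simp add: set_diff_group_def)

lemma zero_mem_set_diff_group:
  assumes "B \<inter> C \<noteq> {}"
  shows "0 \<in> set_diff_group B C"
  using assms unfolding set_diff_group_def by force

theorem corollary2p8:
  fixes T :: "'a::{ab_group_add, finite} set"
  assumes "even (card (UNIV :: 'a set))"
    and "square_free T"
    and "card T = card (UNIV :: 'a set) div 2 - 1"
    and "card (set_diff_group T (insert 0 T)) < card (UNIV :: 'a set)"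
  shows "\<exists>C. cays_perfect_code T C"
proof -
  let ?n = "card (UNIV :: 'a set)" and ?S = "set_diff_group T (insert 0 T)"
  have "?n \<ge> 2"
    using assms(1) finite_UNIV_card_ge_0[where 'a='a] by (cases "?n = 1") auto
  have "card (insert 0 ?S) < ?n"
    using assms(4) \<open>?n \<ge> 2\<close> zero_mem_set_diff_group[of T "insert 0 T"]
    by (cases "T = {}") (auto simp: insert_absorb)
  then have "insert 0 ?S \<noteq> UNIV"
    by auto
  then obtain d where d: "d \<notin> ?S" "d \<noteq> 0"
    by blast
  let ?N = "cays_closed_nbhd T"
  have disjoint: "?N 0 \<inter> ?N d = {}"
    using d by (rule disjoint_cays_closed_nbhd_zero)
  have "card (?N c) = ?n div 2" for c
    using card_cays_closed_nbhd[OF finite assms(2)] assms(3) \<open>?n \<ge> 2\<close> by simp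
  with assms(1) have "card (?N 0) + card (?N d) = ?n"
    by auto
  with disjoint have "?N 0 \<union> ?N d = UNIV"
    by (rule disjoint_Un_eq_UNIV_if_card_sum)
  with disjoint have "cays_perfect_code T {0, d}"
    unfolding cays_perfect_code_iff_closed_nbhd by blast
  then show ?thesis ..
qed

end
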